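(* For every $k\in\{0,\dots,K\}$ with $\sigma_k<\lceil qn\rceil$, the function $\Psi_k^{\mathrm{BSAA}}$ is strictly positive on $(0,q)$ and on $(q,1)$, and $\log\Psi_k^{\mathrm{BSAA}}$ is strictly concave on $(0,q)$ and strictly concave on $(q,1)$ (i.e., $\Psi_k^{\mathrm{BSAA}}$ is strictly log-concave when restricted to $[0,q]$ and when restricted to $[q,1]$).
   Context: Fix $c_u,c_o>0$ and $q=c_u/(c_u+c_o)\in(0,1)$. Fix $K\ge1$, $\bm n=(n_1,\dots,n_K)\in\mathbb N^K$, $n=\sum_k n_k$, $\sigma_k=\sum_{\ell=1}^k n_\ell$ ($\sigma_0=0$). $B_{r,m}(p)=\sum_{j=r}^m\binom mj p^j(1-p)^{m-j}$ (with $B_{r,m}\equiv1$ if $r<0$). For $v\in[0,1]$, $\Psi_k^{\mathrm{BSAA}}(v)=\big(1-B_{\lceil qn\rceil-\sigma_k,\,n-\sigma_k}(v)\big)(v-q)+(q-v)^+$, where $y^+=\max\{y,0\}$. *)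

theory Defs
  imports "HOL-Analysis.Analysis"
begin

definition binom_tail :: "int \<Rightarrow> nat \<Rightarrow> real \<Rightarrow> real" where
  "binom_tail r m p =
     (if r < 0 then 1
      else (\<Sum>j\<in>{nat r..m}. real (m choose j) * p ^ j * (1 - p) ^ (m - j)))"

definition sigma :: "(nat \<Rightarrow> nat) \<Rightarrow> nat \<Rightarrow> nat" where
  "sigma ns k = (\<Sum>l\<in>{1..k}. ns l)"

definition Psi_BSAA :: "real \<Rightarrow> (nat \<Rightarrow> nat) \<Rightarrow> nat \<Rightarrow> nat \<Rightarrow> real \<Rightarrow> real" where
  "Psi_BSAA q ns K k v =
     (let n = sigma ns K in
       (1 - binom_tail (\<lceil>q * real n\<rceil> - int (sigma ns k)) (n - sigma ns k) v) * (v - q)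
       + max (q - v) 0)"

definition strictly_concave_on :: "real set \<Rightarrow> (real \<Rightarrow> real) \<Rightarrow> bool" where
  "strictly_concave_on S f \<longleftrightarrow> convex S \<and>
     (\<forall>x\<in>S. \<forall>y\<in>S. x \<noteq> y \<longrightarrow> (\<forall>u::real. 0 < u \<and> u < 1 \<longrightarrow>
        f (u * x + (1 - u) * y) > u * f x + (1 - u) * f y))"

end

theory Submission
  imports Defs
begin

text \<open>
  With m = n - sigma_k and r = ceil(q n) - sigma_k, and T(v) the probability that a
  Binomial(m, v) variable is at least r, the function Psi equals T(v) (q - v) below q and
  (1 - T(v)) (v - q) above q. The derivative of T is m binom(m-1, r-1) v^(r-1) (1-v)^(m-r);
  dividing T and 1 - T by v^(r-1) (1-v)^(m-r) leaves positive cofactors which are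
  nondecreasing and nonincreasing in v respectively, so the logarithmic derivatives of T and
  of 1 - T are nonincreasing. Adding the strictly decreasing logarithmic derivative of the
  linear factor makes the derivative of ln Psi strictly decreasing on each side of q, and
  strict concavity follows from the mean value theorem.
\<close>

lemma strictly_concave_on_realI:
  fixes f f' :: "real \<Rightarrow> real"
  assumes "convex S"
    and deriv: "\<And>x. x \<in> S \<Longrightarrow> (f has_real_derivative f' x) (at x)"
    and anti: "\<And>x y. x \<in> S \<Longrightarrow> y \<in> S \<Longrightarrow> x < y \<Longrightarrow> f' y < f' x"
  shows "strictly_concave_on S f"
proof -
  have chord: "(1 - t) * f x + t * f y < f ((1 - t) * x + t * y)"
    if xy: "x \<in> S" "y \<in> S" "x < y" and t: "0 < t" "t < 1" for x y t
  proof -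
    define z where "z = (1 - t) * x + t * y"
    have zx: "z - x = t * (y - x)" and yz: "y - z = (1 - t) * (y - x)"
      by (simp_all add: z_def algebra_simps)
    have "x < z" "z < y"
      using zx yz xy t by (metis diff_gt_0_iff_gt mult_pos_pos)+
    have "{x..y} \<subseteq> S"
      using xy \<open>convex S\<close> by (simp add: convex_connected connected_contains_Icc)
    then obtain \<xi> \<eta> where \<xi>: "x < \<xi>" "\<xi> < z" "f z - f x = (z - x) * f' \<xi>"
      and \<eta>: "z < \<eta>" "\<eta> < y" "f y - f z = (y - z) * f' \<eta>"
      using MVT2[of x z f f'] MVT2[of z y f f'] \<open>x < z\<close> \<open>z < y\<close> deriv
      by (metis atLeastAtMost_iff less_imp_le subsetD order.trans)
    have "\<xi> \<in> S" "\<eta> \<in> S"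
      using \<xi> \<eta> \<open>x < z\<close> \<open>z < y\<close> \<open>{x..y} \<subseteq> S\<close> by auto
    then have "f' \<eta> < f' \<xi>"
      using \<xi>(2) \<eta>(1) by (intro anti) auto
    then have "(f y - f z) * (z - x) < (f z - f x) * (y - z)"
      using \<xi>(3) \<eta>(3) \<open>x < z\<close> \<open>z < y\<close> by (simp add: mult_strict_left_mono)
    then have "(f y - f z) * t < (f z - f x) * (1 - t)"
      unfolding zx yz using xy by simp
    then show ?thesis
      by (simp add: z_def algebra_simps)
  qed
  show ?thesis
    unfolding strictly_concave_on_def
  proof (intro conjI ballI allI impI)
    fix x y u :: real
    assume "x \<in> S" "y \<in> S" "x \<noteq> y" "0 < u \<and> u < 1"
    then consider "x < y" | "y < x"
      by linarith
    then show "u * f x + (1 - u) * f y < f (u * x + (1 - u) * y)"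
    proof cases
      case 1
      then show ?thesis
        using chord[of x y "1 - u"] \<open>x \<in> S\<close> \<open>y \<in> S\<close> \<open>0 < u \<and> u < 1\<close> by simp
    next
      case 2
      then show ?thesis
        using chord[of y x u] \<open>x \<in> S\<close> \<open>y \<in> S\<close> \<open>0 < u \<and> u < 1\<close> by (simp add: algebra_simps)
    qed
  qed (fact \<open>convex S\<close>)
qed

lemma strictly_concave_on_cong:
  assumes "\<And>x. x \<in> S \<Longrightarrow> f x = g x"
  shows "strictly_concave_on S f \<longleftrightarrow> strictly_concave_on S g"
proof -
  have "u * x + (1 - u) * y \<in> S"
    if "convex S" "x \<in> S" "y \<in> S" "0 < u" "u < 1" for x y u :: real
    using that convexD[of S x y u "1 - u"] by simp
  then show ?thesis
    using assms unfolding strictly_concave_on_def by (smt (verit))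
qed

lemma strictly_concave_on_ln_mult:
  fixes f g f' g' :: "real \<Rightarrow> real"
  assumes "convex S"
    and pos: "\<And>x. x \<in> S \<Longrightarrow> 0 < f x" "\<And>x. x \<in> S \<Longrightarrow> 0 < g x"
    and deriv: "\<And>x. x \<in> S \<Longrightarrow> (f has_real_derivative f' x) (at x)"
      "\<And>x. x \<in> S \<Longrightarrow> (g has_real_derivative g' x) (at x)"
    and f_anti: "\<And>x y. x \<in> S \<Longrightarrow> y \<in> S \<Longrightarrow> x < y \<Longrightarrow> f' y / f y \<le> f' x / f x"
    and g_anti: "\<And>x y. x \<in> S \<Longrightarrow> y \<in> S \<Longrightarrow> x < y \<Longrightarrow> g' y / g y < g' x / g x"
  shows "strictly_concave_on S (\<lambda>x. ln (f x * g x))"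
proof (rule strictly_concave_on_realI[OF \<open>convex S\<close>])
  fix x assume "x \<in> S"
  then have "((\<lambda>x. ln (f x * g x)) has_real_derivative (f' x * g x + f x * g' x) / (f x * g x)) (at x)"
    using pos deriv by (auto intro!: derivative_eq_intros)
  also have "(f' x * g x + f x * g' x) / (f x * g x) = f' x / f x + g' x / g x"
    using pos(1)[OF \<open>x \<in> S\<close>] pos(2)[OF \<open>x \<in> S\<close>] by (simp add: field_simps)
  finally show "((\<lambda>x. ln (f x * g x)) has_real_derivative f' x / f x + g' x / g x) (at x)" .
next
  fix x y assume "x \<in> S" "y \<in> S" "x < y"
  then show "f' y / f y + g' y / g y < f' x / f x + g' x / g x"
    by (intro add_le_less_mono f_anti g_anti)
qed

definition binomial_upper_tail :: "nat \<Rightarrow> nat \<Rightarrow> real \<Rightarrow> real" where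
  "binomial_upper_tail m r v = (\<Sum>j=r..m. real (m choose j) * v ^ j * (1 - v) ^ (m - j))"

text \<open>As a function of v, the upper tail is the distribution function of Beta(r, m - r + 1),
  whose density this is.\<close>
definition binomial_tail_density :: "nat \<Rightarrow> nat \<Rightarrow> real \<Rightarrow> real" where
  "binomial_tail_density m r v =
     real m * real ((m - 1) choose (r - 1)) * v ^ (r - 1) * (1 - v) ^ (m - r)"

lemma binom_tail_eq_binomial_upper_tail:
  "0 \<le> r \<Longrightarrow> binom_tail r m v = binomial_upper_tail m (nat r) v"
  by (simp add: binom_tail_def binomial_upper_tail_def)

lemma has_real_derivative_binomial_upper_tail:
  assumes "1 \<le> r" "r \<le> m"
  shows "(binomial_upper_tail m r has_real_derivative binomial_tail_density m r v) (at v)"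
  using assms(2,1)
proof (induction r rule: inc_induct)
  case base
  have "binomial_upper_tail m m = (\<lambda>v. v ^ m)"
    by (simp add: binomial_upper_tail_def fun_eq_iff)
  then show ?case
    by (auto intro!: derivative_eq_intros simp: binomial_tail_density_def)
next
  case (step r)
  have split: "binomial_upper_tail m r =
      (\<lambda>v. real (m choose r) * v ^ r * (1 - v) ^ (m - r) + binomial_upper_tail m (Suc r) v)"
    using step.hyps by (simp add: binomial_upper_tail_def fun_eq_iff sum.atLeast_Suc_atMost)
  have "((\<lambda>v. real (m choose r) * v ^ r * (1 - v) ^ (m - r)) has_real_derivative
      real (r * (m choose r)) * v ^ (r - 1) * (1 - v) ^ (m - r)
      - real ((m - r) * (m choose r)) * v ^ r * (1 - v) ^ (m - Suc r)) (at v)"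
    using step.hyps by (auto intro!: derivative_eq_intros simp: algebra_simps of_nat_diff)
  \<comment> \<open>by absorption the sum telescopes: the second term is the density of the next tail\<close>
  also have "real (r * (m choose r)) = real m * real ((m - 1) choose (r - 1))"
    using step.prems times_binomial_minus1_eq[of r m] by simp
  also have "real ((m - r) * (m choose r)) = real m * real ((m - 1) choose r)"
    by (simp only: binomial_absorb_comp) simp
  finally have "((\<lambda>v. real (m choose r) * v ^ r * (1 - v) ^ (m - r)) has_real_derivative
      binomial_tail_density m r v - binomial_tail_density m (Suc r) v) (at v)"
    by (simp add: binomial_tail_density_def)
  from DERIV_add[OF this step.IH] show ?case
    unfolding split by simp
qed

definition upper_tail_cofactor :: "nat \<Rightarrow> nat \<Rightarrow> real \<Rightarrow> real" where
  "upper_tail_cofactor m r v = (\<Sum>j=r..m. real (m choose j) * v * (v / (1 - v)) ^ (j - r))"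

definition lower_tail_cofactor :: "nat \<Rightarrow> nat \<Rightarrow> real \<Rightarrow> real" where
  "lower_tail_cofactor m r v = (\<Sum>j<r. real (m choose j) * (1 - v) * ((1 - v) / v) ^ (r - 1 - j))"

lemma binomial_upper_tail_factor:
  assumes "1 \<le> r" "0 < v" "v < 1"
  shows "binomial_upper_tail m r v = v ^ (r - 1) * (1 - v) ^ (m - r) * upper_tail_cofactor m r v"
  unfolding binomial_upper_tail_def upper_tail_cofactor_def sum_distrib_left
proof (rule sum.cong[OF refl])
  fix j assume j: "j \<in> {r..m}"
  then have "v ^ j = v ^ (r - 1) * v * v ^ (j - r)"
    using assms(1) by (simp flip: power_Suc2 power_add)
  moreover have "(1 - v) ^ (m - r) = (1 - v) ^ (m - j) * (1 - v) ^ (j - r)"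
    using j by (simp flip: power_add)
  ultimately show "real (m choose j) * v ^ j * (1 - v) ^ (m - j) =
      v ^ (r - 1) * (1 - v) ^ (m - r) * (real (m choose j) * v * (v / (1 - v)) ^ (j - r))"
    using assms by (simp add: power_divide field_simps)
qed

lemma one_minus_binomial_upper_tail_factor:
  assumes "r \<le> m" "0 < v" "v < 1"
  shows "1 - binomial_upper_tail m r v =
    v ^ (r - 1) * (1 - v) ^ (m - r) * lower_tail_cofactor m r v"
proof -
  have "1 = (\<Sum>j\<le>m. real (m choose j) * v ^ j * (1 - v) ^ (m - j))"
    using binomial_ring[of v "1 - v" m] by simp
  also have "\<dots> = (\<Sum>j<r. real (m choose j) * v ^ j * (1 - v) ^ (m - j)) + binomial_upper_tail m r v"
    unfolding binomial_upper_tail_def using assms(1)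
    by (subst sum.union_disjoint[symmetric]) (auto intro!: sum.cong)
  finally have "1 - binomial_upper_tail m r v =
      (\<Sum>j<r. real (m choose j) * v ^ j * (1 - v) ^ (m - j))"
    by simp
  also have "\<dots> = v ^ (r - 1) * (1 - v) ^ (m - r) * lower_tail_cofactor m r v"
    unfolding lower_tail_cofactor_def sum_distrib_left
  proof (rule sum.cong[OF refl])
    fix j assume j: "j \<in> {..<r}"
    then have v_pow: "v ^ (r - 1) = v ^ j * v ^ (r - 1 - j)"
      by (simp flip: power_add)
    have "m - j = Suc (m - r + (r - 1 - j))"
      using j assms(1) by auto
    then have w_pow: "(1 - v) ^ (m - j) = (1 - v) ^ (m - r) * (1 - v) ^ (r - 1 - j) * (1 - v)"
      by (metis power_Suc2 power_add)
    show "real (m choose j) * v ^ j * (1 - v) ^ (m - j) =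
        v ^ (r - 1) * (1 - v) ^ (m - r) * (real (m choose j) * (1 - v) * ((1 - v) / v) ^ (r - 1 - j))"
      using assms(2) unfolding v_pow w_pow power_divide by (simp add: ac_simps)
  qed
  finally show ?thesis .
qed

lemma upper_tail_cofactor_pos:
  assumes "r \<le> m" "0 < v" "v < 1"
  shows "0 < upper_tail_cofactor m r v"
  unfolding upper_tail_cofactor_def using assms by (intro sum_pos2[of _ r]) auto

lemma lower_tail_cofactor_pos:
  assumes "1 \<le> r" "r \<le> m" "0 < v" "v < 1"
  shows "0 < lower_tail_cofactor m r v"
  unfolding lower_tail_cofactor_def using assms by (intro sum_pos2[of _ "r - 1"]) auto

lemma upper_tail_cofactor_mono:
  assumes "0 < x" "x \<le> y" "y < 1"
  shows "upper_tail_cofactor m r x \<le> upper_tail_cofactor m r y"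
proof -
  have "x / (1 - x) \<le> y / (1 - y)"
    using assms by (intro frac_le) auto
  then have "x * (x / (1 - x)) ^ i \<le> y * (y / (1 - y)) ^ i" for i
    using assms by (intro mult_mono power_mono) auto
  then show ?thesis
    unfolding upper_tail_cofactor_def
    by (intro sum_mono) (simp add: mult.assoc mult_left_mono)
qed

lemma lower_tail_cofactor_antimono:
  assumes "0 < x" "x \<le> y" "y < 1"
  shows "lower_tail_cofactor m r y \<le> lower_tail_cofactor m r x"
proof -
  have "(1 - y) / y \<le> (1 - x) / x"
    using assms by (intro frac_le) auto
  then have "(1 - y) * ((1 - y) / y) ^ i \<le> (1 - x) * ((1 - x) / x) ^ i" for i
    using assms by (intro mult_mono power_mono) auto
  then show ?thesis
    unfolding lower_tail_cofactor_def
    by (intro sum_mono) (simp add: mult.assoc mult_left_mono)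
qed

lemma binomial_upper_tail_bounds:
  assumes "1 \<le> r" "r \<le> m" "0 < v" "v < 1"
  shows "0 < binomial_upper_tail m r v" "binomial_upper_tail m r v < 1"
proof -
  show "0 < binomial_upper_tail m r v"
    using assms by (simp add: binomial_upper_tail_factor upper_tail_cofactor_pos)
  have "0 < 1 - binomial_upper_tail m r v"
    using assms by (simp add: one_minus_binomial_upper_tail_factor lower_tail_cofactor_pos)
  then show "binomial_upper_tail m r v < 1"
    by simp
qed

lemma binomial_upper_tail_log_deriv_antimono:
  assumes "1 \<le> r" "r \<le> m" "0 < x" "x \<le> y" "y < 1"
  shows "binomial_tail_density m r y / binomial_upper_tail m r y
       \<le> binomial_tail_density m r x / binomial_upper_tail m r x"
proof -
  define c where "c = real m * real ((m - 1) choose (r - 1))"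
  have ratio: "binomial_tail_density m r v / binomial_upper_tail m r v = c / upper_tail_cofactor m r v"
    if "0 < v" "v < 1" for v
    using that assms(1) by (simp add: binomial_upper_tail_factor binomial_tail_density_def c_def)
  have "c / upper_tail_cofactor m r y \<le> c / upper_tail_cofactor m r x"
    using assms upper_tail_cofactor_pos[of r m x] upper_tail_cofactor_mono[of x y m r]
    by (intro divide_left_mono) (auto simp: c_def)
  then show ?thesis
    using assms by (simp add: ratio)
qed

lemma one_minus_binomial_upper_tail_log_deriv_antimono:
  assumes "1 \<le> r" "r \<le> m" "0 < x" "x \<le> y" "y < 1"
  shows "- binomial_tail_density m r y / (1 - binomial_upper_tail m r y)
       \<le> - binomial_tail_density m r x / (1 - binomial_upper_tail m r x)"
proof -
  define c where "c = real m * real ((m - 1) choose (r - 1))"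
  have ratio: "binomial_tail_density m r v / (1 - binomial_upper_tail m r v)
      = c / lower_tail_cofactor m r v"
    if "0 < v" "v < 1" for v
    using that assms(2)
    by (simp add: one_minus_binomial_upper_tail_factor binomial_tail_density_def c_def)
  have "c / lower_tail_cofactor m r x \<le> c / lower_tail_cofactor m r y"
    using assms lower_tail_cofactor_pos[of r m y] lower_tail_cofactor_antimono[of x y m r]
    by (intro divide_left_mono) (auto simp: c_def)
  then show ?thesis
    using assms by (simp add: ratio)
qed

lemma binomial_tail_loss_pos_log_concave:
  fixes q :: real
  assumes "0 < q" "q < 1" "1 \<le> r" "r \<le> m"
  defines "P \<equiv> \<lambda>v. (1 - binomial_upper_tail m r v) * (v - q) + max (q - v) 0"
  shows "(\<forall>v\<in>{0<..<q}. 0 < P v) \<and> (\<forall>v\<in>{q<..<1}. 0 < P v)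
       \<and> strictly_concave_on {0<..<q} (\<lambda>v. ln (P v))
       \<and> strictly_concave_on {q<..<1} (\<lambda>v. ln (P v))"
proof (intro conjI)
  let ?T = "binomial_upper_tail m r" and ?d = "binomial_tail_density m r"
  have below: "P v = ?T v * (q - v)" if "v \<in> {0<..<q}" for v
    using that by (simp add: P_def algebra_simps)
  have above: "P v = (1 - ?T v) * (v - q)" if "v \<in> {q<..<1}" for v
    using that by (simp add: P_def algebra_simps)
  have bounds: "0 < ?T v" "?T v < 1" if "0 < v" "v < 1" for v
    using binomial_upper_tail_bounds assms(3,4) that by auto
  have deriv: "(?T has_real_derivative ?d v) (at v)" for v
    using assms(3,4) by (rule has_real_derivative_binomial_upper_tail)
  show "\<forall>v\<in>{0<..<q}. 0 < P v" "\<forall>v\<in>{q<..<1}. 0 < P v"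
    using below above bounds assms(1,2) by auto
  have "strictly_concave_on {0<..<q} (\<lambda>v. ln (?T v * (q - v)))"
  proof (rule strictly_concave_on_ln_mult[where f' = ?d and g' = "\<lambda>_. -1"])
    fix x assume "x \<in> {0<..<q}"
    then show "0 < ?T x"
      using bounds assms(2) by simp
    show "((\<lambda>v. q - v) has_real_derivative -1) (at x)"
      by (auto intro!: derivative_eq_intros)
  next
    fix x y assume "x \<in> {0<..<q}" "y \<in> {0<..<q}" "x < y"
    then show "?d y / ?T y \<le> ?d x / ?T x"
      using assms(2-4) by (intro binomial_upper_tail_log_deriv_antimono) auto
    show "-1 / (q - y) < -1 / (q - x)"
      using \<open>y \<in> {0<..<q}\<close> \<open>x < y\<close> by (simp add: divide_simps)
  qed (use deriv in auto)
  then show "strictly_concave_on {0<..<q} (\<lambda>v. ln (P v))"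
    using strictly_concave_on_cong[of "{0<..<q}" "\<lambda>v. ln (P v)"] below by simp
  have "strictly_concave_on {q<..<1} (\<lambda>v. ln ((1 - ?T v) * (v - q)))"
  proof (rule strictly_concave_on_ln_mult[where f' = "\<lambda>v. - ?d v" and g' = "\<lambda>_. 1"])
    fix x assume "x \<in> {q<..<1}"
    then show "0 < 1 - ?T x"
      using bounds assms(1) by simp
    show "((\<lambda>v. 1 - ?T v) has_real_derivative - ?d x) (at x)"
      using deriv by (auto intro!: derivative_eq_intros)
    show "((\<lambda>v. v - q) has_real_derivative 1) (at x)"
      by (auto intro!: derivative_eq_intros)
  next
    fix x y assume "x \<in> {q<..<1}" "y \<in> {q<..<1}" "x < y"
    then show "- ?d y / (1 - ?T y) \<le> - ?d x / (1 - ?T x)"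
      using assms by (intro one_minus_binomial_upper_tail_log_deriv_antimono) auto
    show "1 / (y - q) < 1 / (x - q)"
      using \<open>x \<in> {q<..<1}\<close> \<open>x < y\<close> by (simp add: divide_simps)
  qed auto
  then show "strictly_concave_on {q<..<1} (\<lambda>v. ln (P v))"
    using strictly_concave_on_cong[of "{q<..<1}" "\<lambda>v. ln (P v)"] above by simp
qed

theorem lemma3:
  fixes c_u c_o :: real and K :: nat and ns :: "nat \<Rightarrow> nat" and k :: nat
  assumes "c_u > 0" and "c_o > 0"
    and "K \<ge> 1"
    and "\<forall>l\<in>{1..K}. ns l \<ge> 1"
    and "k \<le> K"
    and "int (sigma ns k) < \<lceil>(c_u / (c_u + c_o)) * real (sigma ns K)\<rceil>"
  shows "(\<forall>v\<in>{0<..<c_u / (c_u + c_o)}. Psi_BSAA (c_u / (c_u + c_o)) ns K k v > 0)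
       \<and> (\<forall>v\<in>{c_u / (c_u + c_o)<..<1}. Psi_BSAA (c_u / (c_u + c_o)) ns K k v > 0)
       \<and> strictly_concave_on {0<..<c_u / (c_u + c_o)}
            (\<lambda>v. ln (Psi_BSAA (c_u / (c_u + c_o)) ns K k v))
       \<and> strictly_concave_on {c_u / (c_u + c_o)<..<1}
            (\<lambda>v. ln (Psi_BSAA (c_u / (c_u + c_o)) ns K k v))"
proof -
  define q where "q = c_u / (c_u + c_o)"
  define n where "n = sigma ns K"
  define s where "s = sigma ns k"
  define r where "r = nat (\<lceil>q * real n\<rceil> - int s)"
  have q: "0 < q" "q < 1"
    using assms(1,2) by (auto simp: q_def)
  then have "\<lceil>q * real n\<rceil> \<le> int n"
    by (simp add: ceiling_le_iff mult_left_le_one_le)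
  moreover have "int s < \<lceil>q * real n\<rceil>"
    using assms(6) by (simp add: q_def n_def s_def)
  ultimately have r: "1 \<le> r" "r \<le> n - s"
    by (auto simp: r_def)
  have "Psi_BSAA q ns K k = (\<lambda>v. (1 - binomial_upper_tail (n - s) r v) * (v - q) + max (q - v) 0)"
    using \<open>int s < \<lceil>q * real n\<rceil>\<close>
    by (simp add: Psi_BSAA_def Let_def fun_eq_iff binom_tail_eq_binomial_upper_tail
        r_def n_def s_def)
  then show ?thesis
    using binomial_tail_loss_pos_log_concave[OF q r] by (simp add: q_def)
qed

end
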